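(* Let $\kappa$ be an uncountable regular cardinal, let $\mathcal{I}$ be a $\kappa$-complete proper ideal on $\kappa$ containing every bounded subset of $\kappa$, and let $\nu\in\{2,\kappa\}$. Consider ${}^{\kappa}\nu$ with the topology $\tau_{\mathcal{I}}$. Then: (1) $\tau_{\mathcal{I}}$ is perfect (no isolated points), regular Hausdorff, and zero-dimensional (has a basis of clopen sets). (2) For any ordinal $\alpha$: the intersection of every sequence $\langle U_\beta:\beta<\alpha\rangle$ of $\tau_{\mathcal{I}}$-open sets is $\tau_{\mathcal{I}}$-open if and only if $\alpha<\kappa$. Consequently, the family of $\tau_{\mathcal{I}}$-clopen subsets of ${}^{\kappa}\nu$ is closed under complements and under unions of fewer than $\kappa$ sets. (3) For every $x\in{}^{\kappa}\nu$, every $\tau_{\mathcal{I}}$-open neighborhood basis of $x$ has size at least $\kappa$. Moreover, every point has a $\tau_{\mathcal{I}}$-open neighborhood basis of size $\kappa$ if and only if $\mathcal{I}$ has a basis of size $\kappa$. If moreover $\mathcal{I}$ contains an unbounded subset of $\kappa$, then: (4) $\tau_{\mathcal{I}}$ is neither compact nor $\kappa$-compact; (5) $\tau_{\mathcal{I}}$ has weight $2^\kappa$, and $|\tau_{\mathcal{I}}|=2^{2^\kappa}$; (6) $\tau_{\mathcal{I}}$ has density character $2^\kappa$.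
   Context: ${}^{\kappa}\nu$ is the set of functions $\kappa\to\nu$. For $f\colon D\to\nu$ with $D\in\mathcal{I}$, $\mathbf{N}_f=\{x\in{}^{\kappa}\nu:f\subseteq x\}$; $\tau_{\mathcal{I}}$ is the topology generated by these sets. A basis for $\mathcal{I}$ is a family $\mathcal{B}\subseteq\mathcal{I}$ such that each member of $\mathcal{I}$ is contained in a member of $\mathcal{B}$. A space is $\kappa$-compact if every open cover has a subcover of size less than $\kappa$. Weight is the least size of an open basis; density character is the least size of a dense subset. *)

theory Defs
  imports "HOL-Analysis.Analysis"
begin

unbundle cardinal_syntax

text \<open>Cardinals are represented as in Main's BNF cardinal library: a cardinal
  \<open>\<kappa>\<close> is a cardinal order \<open>r\<close> on its field; \<open>|A|\<close> is the cardinal of \<open>A\<close>,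
  \<open><o\<close>, \<open>\<le>o\<close>, \<open>=o\<close> compare cardinals/ordinals.\<close>

definition kbounded :: "'a rel \<Rightarrow> 'a set \<Rightarrow> bool" where
  "kbounded r A \<equiv> \<exists>\<beta>\<in>Field r. \<forall>\<alpha>\<in>A. (\<alpha>, \<beta>) \<in> r"

definition kcomplete_proper_ideal :: "'a rel \<Rightarrow> 'a set set \<Rightarrow> bool" where
  "kcomplete_proper_ideal r I \<equiv>
     (\<forall>A\<in>I. A \<subseteq> Field r) \<and> {} \<in> I \<and>
     (\<forall>A\<in>I. \<forall>B. B \<subseteq> A \<longrightarrow> B \<in> I) \<and>
     (\<forall>A\<in>I. \<forall>B\<in>I. A \<union> B \<in> I) \<and>
     (\<forall>F. F \<subseteq> I \<and> |F| <o r \<longrightarrow> \<Union>F \<in> I) \<and>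
     Field r \<notin> I"

text \<open>The space \<open>\<^sup>\<kappa>\<nu>\<close>: functions \<open>\<kappa> \<rightarrow> V\<close>, with \<open>\<kappa> = UNIV\<close>.\<close>
definition fspace :: "'b set \<Rightarrow> ('a \<Rightarrow> 'b) set" where
  "fspace V = {x. \<forall>i. x i \<in> V}"

text \<open>The sets \<open>N_f\<close> for \<open>f : D \<rightarrow> V\<close>, \<open>D \<in> I\<close> (f given by a total function
  whose values outside \<open>D\<close> are irrelevant).\<close>
definition Nset :: "'b set \<Rightarrow> 'a set \<Rightarrow> ('a \<Rightarrow> 'b) \<Rightarrow> ('a \<Rightarrow> 'b) set" where
  "Nset V D f = {x \<in> fspace V. \<forall>i\<in>D. x i = f i}"

definition tauI :: "'a set set \<Rightarrow> 'b set \<Rightarrow> ('a \<Rightarrow> 'b) topology" where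
  "tauI I V = topology_generated_by
      {Nset V D f | D f. D \<in> I \<and> (\<forall>i\<in>D. f i \<in> V)}"

definition no_isolated_points :: "'a topology \<Rightarrow> bool" where
  "no_isolated_points T \<equiv> \<forall>x\<in>topspace T. \<not> openin T {x}"

definition clopenin :: "'a topology \<Rightarrow> 'a set \<Rightarrow> bool" where
  "clopenin T U \<equiv> openin T U \<and> closedin T U"

definition open_basis :: "'a topology \<Rightarrow> 'a set set \<Rightarrow> bool" where
  "open_basis T B \<equiv> (\<forall>U\<in>B. openin T U) \<and> (\<forall>W. openin T W \<longrightarrow> (\<exists>C\<subseteq>B. \<Union>C = W))"

definition zero_dim :: "'a topology \<Rightarrow> bool" where
  "zero_dim T \<equiv> \<exists>B. open_basis T B \<and> (\<forall>U\<in>B. clopenin T U)"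

definition open_nbhd_basis :: "'a topology \<Rightarrow> 'a \<Rightarrow> 'a set set \<Rightarrow> bool" where
  "open_nbhd_basis T x B \<equiv> (\<forall>U\<in>B. openin T U \<and> x \<in> U) \<and>
     (\<forall>W. openin T W \<and> x \<in> W \<longrightarrow> (\<exists>U\<in>B. U \<subseteq> W))"

definition ideal_basis :: "'a set set \<Rightarrow> 'a set set \<Rightarrow> bool" where
  "ideal_basis I B \<equiv> B \<subseteq> I \<and> (\<forall>A\<in>I. \<exists>C\<in>B. A \<subseteq> C)"

definition kappa_compact :: "'k rel \<Rightarrow> 'a topology \<Rightarrow> bool" where
  "kappa_compact r T \<equiv> \<forall>\<U>. (\<forall>U\<in>\<U>. openin T U) \<and> topspace T \<subseteq> \<Union>\<U> \<longrightarrow>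
      (\<exists>\<V>\<subseteq>\<U>. card_of \<V> <o r \<and> topspace T \<subseteq> \<Union>\<V>)"

definition weight_is :: "'a topology \<Rightarrow> 'c rel \<Rightarrow> bool" where
  "weight_is T c \<equiv> (\<exists>B. open_basis T B \<and> |B| =o c) \<and> (\<forall>B. open_basis T B \<longrightarrow> c \<le>o card_of B)"

definition density_is :: "'a topology \<Rightarrow> 'c rel \<Rightarrow> bool" where
  "density_is T c \<equiv>
     (\<exists>D. D \<subseteq> topspace T \<and> T closure_of D = topspace T \<and> |D| =o c) \<and>
     (\<forall>D. D \<subseteq> topspace T \<and> T closure_of D = topspace T \<longrightarrow> c \<le>o card_of D)"

end

theory Submission
  imports Defs
begin

text \<open>
  Every basic set \<open>N\<^sub>f\<close> is closed as well as open: a point outside \<open>N\<^sub>f\<close> differs from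
  \<open>f\<close> at some \<open>i \<in> dom f\<close>, and its basic neighbourhood fixing the coordinate \<open>i\<close> misses
  \<open>N\<^sub>f\<close>. So the topology is zero-dimensional, hence regular, and it is \<open>T\<^sub>1\<close> because
  \<open>{x}\<close> is \<open>N\<^sub>x\<close> with full domain. By \<open>\<kappa>\<close>-completeness the intersection of fewer than
  \<open>\<kappa>\<close> basic neighbourhoods of \<open>x\<close> contains another one, so fewer than \<open>\<kappa>\<close> open sets
  have open intersection, whereas the \<open>\<kappa>\<close> neighbourhoods of \<open>x\<close> fixing one coordinate
  intersect to \<open>{x}\<close>, which is not open since \<open>\<kappa> \<notin> I\<close>. For the same reason
  \<open>D \<mapsto> N\<^bsub>x|D\<^esub>\<close> turns bases of \<open>I\<close> into neighbourhood bases of \<open>x\<close> and back,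
  and \<open>I\<close> has no basis of size below \<open>\<kappa>\<close>, as its union would be \<open>\<kappa>\<close>.

  If \<open>A \<in> I\<close> is unbounded then \<open>|A| = \<kappa>\<close> by regularity, and the sets \<open>N\<^bsub>x|A\<^esub>\<close>
  partition the space into at least \<open>2\<^sup>\<kappa>\<close> nonempty open sets. Such a partition is an
  open cover without proper subcover, it forces every basis and every dense set to have at
  least \<open>2\<^sup>\<kappa>\<close> elements, and its subfamilies give \<open>2\<^bsup>2\<^sup>\<kappa>\<^esup>\<close> distinct open sets. The
  matching upper bounds come from the basis of all \<open>N\<^bsub>x|D\<^esub>\<close>, of which there are
  \<open>2\<^sup>\<kappa>\<close>.
\<close>

section \<open>Cardinal arithmetic\<close>

lemma card_of_Pow_mono:
  assumes "|A| \<le>o |B|"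
  shows "|Pow A| \<le>o |Pow B|"
proof -
  obtain f where f: "inj_on f A" "f ` A \<subseteq> B"
    using assms card_of_ordLeq[of A B] by blast
  show ?thesis
  proof (rule card_of_ordLeqI[of "image f"])
    show "inj_on (image f) (Pow A)"
      using f(1) by (rule inj_on_image_Pow)
  qed (use f(2) in blast)
qed

lemma card_of_Pow_cong:
  fixes A :: "'a set" and B :: "'b set"
  assumes "|A| =o |B|"
  shows "|Pow A| =o |Pow B|"
  using assms by (simp add: ordIso_iff_ordLeq card_of_Pow_mono)

lemma card_of_fspace_le_Pow:
  assumes "infinite (UNIV :: 'a set)" and "|V| \<le>o |UNIV :: 'a set|"
  shows "|fspace V :: ('a \<Rightarrow> 'b) set| \<le>o |Pow (UNIV :: 'a set)|"
proof -
  have "|fspace V :: ('a \<Rightarrow> 'b) set| \<le>o |Pow ((UNIV :: 'a set) \<times> V)|"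
  proof (rule card_of_ordLeqI[of "\<lambda>x. range (\<lambda>i. (i, x i))"])
    show "inj_on (\<lambda>x. range (\<lambda>i. (i, x i))) (fspace V)"
      by (rule inj_onI) (simp add: fun_eq_iff, blast)
    show "range (\<lambda>i. (i, x i)) \<in> Pow ((UNIV :: 'a set) \<times> V)" if "x \<in> fspace V" for x
      using that unfolding fspace_def by blast
  qed
  also have "|Pow ((UNIV :: 'a set) \<times> V)| \<le>o |Pow (UNIV :: 'a set)|"
  proof (rule card_of_Pow_mono)
    have "|(UNIV :: 'a set) \<times> V| \<le>o |(UNIV :: 'a set) \<times> (UNIV :: 'a set)|"
      using assms(2) by (rule card_of_Times_mono2)
    also have "|(UNIV :: 'a set) \<times> (UNIV :: 'a set)| =o |UNIV :: 'a set|"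
      using assms(1) by (rule card_of_Times_same_infinite)
    finally show "|(UNIV :: 'a set) \<times> V| \<le>o |UNIV :: 'a set|" .
  qed
  finally show ?thesis .
qed

lemma card_of_unbounded_regular:
  fixes r :: "'a rel"
  assumes "Card_order r" and "regularCard r" and "A \<subseteq> Field r" and "\<not> kbounded r A"
  shows "|A| =o r"
proof -
  have lin: "Linear_order r"
    using card_order_on_well_order_on[OF assms(1)] unfolding well_order_on_def by (rule conjunct1)
  have "cofinal A r"
    unfolding cofinal_def
  proof
    fix a assume a: "a \<in> Field r"
    then obtain b where b: "b \<in> A" "(b, a) \<notin> r"
      using assms(4) unfolding kbounded_def by blast
    then have "(a, b) \<in> r - Id"
      using Linear_order_in_diff_Id[OF lin a, of b] assms(3) by blast
    then show "\<exists>b\<in>A. a \<noteq> b \<and> (a, b) \<in> r"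
      using b(1) by blast
  qed
  then show ?thesis
    using assms(2,3) unfolding regularCard_def by blast
qed

section \<open>Bases and disjoint open families\<close>

lemma clopenin_topspace_diff: "clopenin X C \<Longrightarrow> clopenin X (topspace X - C)"
  by (auto simp: clopenin_def)

lemma open_basis_Union_subsets:
  assumes "open_basis X B" and "openin X W"
  shows "\<Union>{b \<in> B. b \<subseteq> W} = W"
  using assms unfolding open_basis_def by blast

lemma zero_dim_imp_regular_space:
  assumes "zero_dim X"
  shows "regular_space X"
  unfolding neighbourhood_base_of_closedin[symmetric] neighbourhood_base_of
proof (intro allI impI)
  fix W x assume W: "openin X W \<and> x \<in> W"
  obtain B where B: "open_basis X B" "\<And>U. U \<in> B \<Longrightarrow> clopenin X U"
    using assms unfolding zero_dim_def by blast
  then obtain U where "U \<in> B" "x \<in> U" "U \<subseteq> W"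
    using open_basis_Union_subsets[OF B(1)] W by blast
  then show "\<exists>U V. openin X U \<and> closedin X V \<and> x \<in> U \<and> U \<subseteq> V \<and> V \<subseteq> W"
    using B(2) unfolding clopenin_def by blast
qed

lemma card_of_open_sets_le_Pow_basis:
  assumes "open_basis X B"
  shows "|{W. openin X W}| \<le>o |Pow B|"
proof (rule card_of_ordLeqI[of "\<lambda>W. {b \<in> B. b \<subseteq> W}"])
  show "inj_on (\<lambda>W. {b \<in> B. b \<subseteq> W}) {W. openin X W}"
  proof (rule inj_onI)
    fix W W' assume "W \<in> {W. openin X W}" "W' \<in> {W. openin X W}"
      and eq: "{b \<in> B. b \<subseteq> W} = {b \<in> B. b \<subseteq> W'}"
    then have "\<Union>{b \<in> B. b \<subseteq> W} = W" "\<Union>{b \<in> B. b \<subseteq> W'} = W'"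
      using open_basis_Union_subsets[OF assms] by blast+
    then show "W = W'"
      using eq by metis
  qed
qed auto

lemma card_of_disjoint_family_le:
  assumes "pairwise disjnt \<U>" and "\<And>U. U \<in> \<U> \<Longrightarrow> \<exists>b\<in>B. b \<noteq> {} \<and> b \<subseteq> U"
  shows "|\<U>| \<le>o |B|"
proof -
  obtain b where b: "\<And>U. U \<in> \<U> \<Longrightarrow> b U \<in> B \<and> b U \<noteq> {} \<and> b U \<subseteq> U"
    using assms(2) by metis
  have "inj_on b \<U>"
  proof (rule inj_onI)
    fix U U' assume U: "U \<in> \<U>" "U' \<in> \<U>" "b U = b U'"
    then have "b U \<subseteq> U \<inter> U'" "b U \<noteq> {}"
      using b by auto
    then have "\<not> disjnt U U'"
      by (auto simp: disjnt_def)
    then show "U = U'"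
      using assms(1) U unfolding pairwise_def by blast
  qed
  then show ?thesis
    using b by (intro card_of_ordLeqI) auto
qed

lemma card_of_dense_ge_disjoint_open_family:
  assumes "pairwise disjnt \<U>" and "\<And>U. U \<in> \<U> \<Longrightarrow> openin X U \<and> U \<noteq> {}"
    and "X closure_of D = topspace X"
  shows "|\<U>| \<le>o |D|"
proof -
  have "|\<U>| \<le>o |(\<lambda>y. {y}) ` D|"
  proof (rule card_of_disjoint_family_le[OF assms(1)])
    fix U assume "U \<in> \<U>"
    then obtain x where "x \<in> U" "openin X U"
      using assms(2) by blast
    moreover have "x \<in> X closure_of D"
      using assms(3) openin_subset \<open>x \<in> U\<close> \<open>openin X U\<close> by blast
    ultimately have "\<exists>y \<in> D. y \<in> U"
      unfolding in_closure_of by blast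
    then show "\<exists>b\<in>(\<lambda>y. {y}) ` D. b \<noteq> {} \<and> b \<subseteq> U"
      by blast
  qed
  also have "|(\<lambda>y. {y}) ` D| \<le>o |D|"
    by (rule card_of_image)
  finally show ?thesis .
qed

lemma card_of_open_basis_ge_disjoint_open_family:
  assumes "pairwise disjnt \<U>" and "\<And>U. U \<in> \<U> \<Longrightarrow> openin X U \<and> U \<noteq> {}"
    and "open_basis X B"
  shows "|\<U>| \<le>o |B|"
proof (rule card_of_disjoint_family_le[OF assms(1)])
  fix U assume "U \<in> \<U>"
  then have "\<Union>{b \<in> B. b \<subseteq> U} = U" "U \<noteq> {}"
    using assms(2) open_basis_Union_subsets[OF assms(3)] by auto
  then show "\<exists>b\<in>B. b \<noteq> {} \<and> b \<subseteq> U"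
    by blast
qed

lemma Union_subset_imp_subset_disjoint_family:
  assumes "pairwise disjnt \<U>" and "{} \<notin> \<U>" and "\<S> \<subseteq> \<U>" and "\<S>' \<subseteq> \<U>"
    and "\<Union>\<S> \<subseteq> \<Union>\<S>'"
  shows "\<S> \<subseteq> \<S>'"
proof
  fix U assume "U \<in> \<S>"
  then have "U \<noteq> {}"
    using assms(2,3) by auto
  then obtain x where "x \<in> U"
    by blast
  then obtain U' where "U' \<in> \<S>'" "x \<in> U'"
    using \<open>U \<in> \<S>\<close> assms(5) by blast
  then show "U \<in> \<S>'"
    using \<open>x \<in> U\<close> \<open>U \<in> \<S>\<close> assms(1,3,4) by (metis disjnt_iff pairwiseD subsetD)
qed

lemma card_of_open_sets_ge_disjoint_open_family:
  assumes "pairwise disjnt \<U>" and "\<And>U. U \<in> \<U> \<Longrightarrow> openin X U \<and> U \<noteq> {}"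
  shows "|Pow \<U>| \<le>o |{W. openin X W}|"
proof (rule card_of_ordLeqI[of Union])
  have "{} \<notin> \<U>"
    using assms(2) by blast
  show "inj_on Union (Pow \<U>)"
  proof (rule inj_onI)
    fix \<S> \<S>' assume "\<S> \<in> Pow \<U>" "\<S>' \<in> Pow \<U>" "\<Union>\<S> = \<Union>\<S>'"
    then show "\<S> = \<S>'"
      using Union_subset_imp_subset_disjoint_family[OF assms(1) \<open>{} \<notin> \<U>\<close>]
      by (metis PowD order_refl subset_antisym)
  qed
  show "\<And>\<S>. \<S> \<in> Pow \<U> \<Longrightarrow> \<Union>\<S> \<in> {W. openin X W}"
    using assms(2) by auto
qed

lemma subcover_of_disjoint_open_cover:
  assumes "pairwise disjnt \<U>" and "\<And>U. U \<in> \<U> \<Longrightarrow> openin X U \<and> U \<noteq> {}"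
    and "\<Union>\<U> = topspace X" and "\<F> \<subseteq> \<U>" and "topspace X \<subseteq> \<Union>\<F>"
  shows "\<F> = \<U>"
proof
  have "{} \<notin> \<U>"
    using assms(2) by blast
  then show "\<U> \<subseteq> \<F>"
    using Union_subset_imp_subset_disjoint_family[OF assms(1) _ order_refl assms(4)] assms(3,5)
    by blast
qed (rule assms(4))

lemma not_compact_space_disjoint_open_cover:
  assumes "pairwise disjnt \<U>" and "\<And>U. U \<in> \<U> \<Longrightarrow> openin X U \<and> U \<noteq> {}"
    and "\<Union>\<U> = topspace X" and "infinite \<U>"
  shows "\<not> compact_space X"
proof
  assume "compact_space X"
  then obtain \<F> where "finite \<F>" "\<F> \<subseteq> \<U>" "topspace X \<subseteq> \<Union>\<F>"
    using assms(2,3) unfolding compact_space_alt by (metis order_refl)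
  then show False
    using subcover_of_disjoint_open_cover[OF assms(1-3)] assms(4) by blast
qed

lemma not_kappa_compact_disjoint_open_cover:
  assumes "pairwise disjnt \<U>" and "\<And>U. U \<in> \<U> \<Longrightarrow> openin X U \<and> U \<noteq> {}"
    and "\<Union>\<U> = topspace X" and "r \<le>o |\<U>|"
  shows "\<not> kappa_compact r X"
proof
  assume "kappa_compact r X"
  then obtain \<F> where "|\<F>| <o r" "\<F> \<subseteq> \<U>" "topspace X \<subseteq> \<Union>\<F>"
    using assms(2,3) unfolding kappa_compact_def by (metis order_refl)
  then show False
    using subcover_of_disjoint_open_cover[OF assms(1-3)] assms(4) not_ordLess_ordLeq by blast
qed

section \<open>The topology \<open>\<tau>\<^sub>I\<close>\<close>

lemma Nset_self: "x \<in> fspace V \<Longrightarrow> x \<in> Nset V D x"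
  by (simp add: Nset_def)

lemma Nset_antimono: "D \<subseteq> E \<Longrightarrow> Nset V E f \<subseteq> Nset V D f"
  by (auto simp: Nset_def)

lemma Nset_eq_Nset: "x \<in> Nset V D f \<Longrightarrow> Nset V D x = Nset V D f"
  by (auto simp: Nset_def)

lemma Nset_UNIV: "x \<in> fspace V \<Longrightarrow> Nset V UNIV x = {x}"
  by (auto simp: Nset_def)

locale tauI_space =
  fixes I :: "'a set set" and V :: "'b set"
  assumes empty_in_I: "{} \<in> I"
    and Un_in_I: "A \<in> I \<Longrightarrow> B \<in> I \<Longrightarrow> A \<union> B \<in> I"
    and singleton_in_I: "{i} \<in> I"
    and UNIV_notin_I: "UNIV \<notin> I"
    and two_values: "\<exists>a b. a \<in> V \<and> b \<in> V \<and> a \<noteq> b"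
begin

abbreviation T :: "('a \<Rightarrow> 'b) topology" where
  "T \<equiv> tauI I V"

lemma subsingleton_in_I:
  assumes "\<And>i j. i \<in> A \<Longrightarrow> j \<in> A \<Longrightarrow> i = j"
  shows "A \<in> I"
  using assms empty_in_I singleton_in_I by (metis ex_in_conv insertI1 subset_singleton_iff subsetI)

lemma openin_tauI_imp:
  assumes "openin T U"
  shows "U \<subseteq> fspace V \<and> (\<forall>x\<in>U. \<exists>D\<in>I. Nset V D x \<subseteq> U)"
proof -
  have "generate_topology_on {Nset V D f | D f. D \<in> I \<and> (\<forall>i\<in>D. f i \<in> V)} U"
    using assms unfolding tauI_def by (rule openin_topology_generated_by)
  then show ?thesis
  proof induction
    case Empty
    then show ?case by simp
  next
    case (Int U1 U2)
    show ?case
    proof (intro conjI ballI)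
      show "U1 \<inter> U2 \<subseteq> fspace V"
        using Int by blast
      fix x assume "x \<in> U1 \<inter> U2"
      then obtain D1 D2 where "D1 \<in> I" "D2 \<in> I" "Nset V D1 x \<subseteq> U1" "Nset V D2 x \<subseteq> U2"
        using Int by blast
      moreover have "Nset V (D1 \<union> D2) x \<subseteq> Nset V D1 x \<inter> Nset V D2 x"
        by (simp add: Nset_antimono)
      ultimately show "\<exists>D\<in>I. Nset V D x \<subseteq> U1 \<inter> U2"
        using Un_in_I by blast
    qed
  next
    case (UN K)
    then show ?case by blast
  next
    case (Basis U)
    then show ?case
      using Nset_eq_Nset by (fastforce simp: Nset_def)
  qed
qed

lemma openin_tauI_iff:
  "openin T U \<longleftrightarrow> U \<subseteq> fspace V \<and> (\<forall>x\<in>U. \<exists>D\<in>I. Nset V D x \<subseteq> U)"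
proof
  assume U: "U \<subseteq> fspace V \<and> (\<forall>x\<in>U. \<exists>D\<in>I. Nset V D x \<subseteq> U)"
  then obtain D where D: "\<And>x. x \<in> U \<Longrightarrow> D x \<in> I \<and> Nset V (D x) x \<subseteq> U"
    by metis
  have U_eq: "U = (\<Union>x\<in>U. Nset V (D x) x)"
    using D U Nset_self by blast
  have "openin T (Nset V (D x) x)" if "x \<in> U" for x
  proof -
    have "\<forall>i\<in>D x. x i \<in> V"
      using U that unfolding fspace_def by blast
    then show ?thesis
      unfolding tauI_def using D[OF that] by (intro topology_generated_by_Basis) blast
  qed
  then have "openin T (\<Union>x\<in>U. Nset V (D x) x)"
    by (intro openin_Union) blast
  then show "openin T U"
    using U_eq by simp
qed (rule openin_tauI_imp)

lemma openin_Nset: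
  assumes "D \<in> I"
  shows "openin T (Nset V D f)"
  unfolding openin_tauI_iff
proof (intro conjI ballI)
  show "Nset V D f \<subseteq> fspace V"
    by (auto simp: Nset_def)
  fix y assume "y \<in> Nset V D f"
  then have "Nset V D y = Nset V D f"
    by (rule Nset_eq_Nset)
  then show "\<exists>E\<in>I. Nset V E y \<subseteq> Nset V D f"
    using assms by blast
qed

lemma topspace_tauI: "topspace T = fspace V"
proof
  show "topspace T \<subseteq> fspace V"
    using openin_tauI_imp[OF openin_topspace] by blast
  show "fspace V \<subseteq> topspace T"
  proof
    fix x :: "'a \<Rightarrow> 'b" assume "x \<in> fspace V"
    then have "x \<in> Nset V {} x"
      by (rule Nset_self)
    then show "x \<in> topspace T"
      using openin_subset[OF openin_Nset[OF empty_in_I]] by blast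
  qed
qed

lemma closedin_Nset: "closedin T (Nset V D f)"
  unfolding closedin_def topspace_tauI
proof
  show "Nset V D f \<subseteq> fspace V"
    by (auto simp: Nset_def)
  show "openin T (fspace V - Nset V D f)"
    unfolding openin_tauI_iff
  proof (intro conjI ballI)
    fix y assume "y \<in> fspace V - Nset V D f"
    then obtain i where "i \<in> D" "y i \<noteq> f i"
      by (auto simp: Nset_def)
    then have "Nset V {i} y \<subseteq> fspace V - Nset V D f"
      by (auto simp: Nset_def)
    then show "\<exists>E\<in>I. Nset V E y \<subseteq> fspace V - Nset V D f"
      using singleton_in_I by blast
  qed blast
qed

lemma t1_space_tauI: "t1_space T"
  unfolding t1_space_closedin_singleton topspace_tauI
proof
  fix x :: "'a \<Rightarrow> 'b" assume "x \<in> fspace V"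
  then show "closedin T {x}"
    using closedin_Nset[of UNIV x] by (simp add: Nset_UNIV)
qed

definition Nset_basis :: "('a \<Rightarrow> 'b) set set" where
  "Nset_basis = {Nset V D x | D x. D \<in> I \<and> x \<in> fspace V}"

lemma open_basis_Nset_basis: "open_basis T Nset_basis"
  unfolding open_basis_def
proof (intro conjI allI impI ballI)
  show "openin T U" if "U \<in> Nset_basis" for U
    using that openin_Nset unfolding Nset_basis_def by blast
  fix W assume W: "openin T W"
  have "W \<subseteq> \<Union>{b \<in> Nset_basis. b \<subseteq> W}"
  proof
    fix x assume "x \<in> W"
    then obtain D where "D \<in> I" "Nset V D x \<subseteq> W" "x \<in> fspace V"
      using W unfolding openin_tauI_iff by blast
    then show "x \<in> \<Union>{b \<in> Nset_basis. b \<subseteq> W}"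
      unfolding Nset_basis_def using Nset_self by blast
  qed
  then show "\<exists>C\<subseteq>Nset_basis. \<Union>C = W"
    by (intro exI[of _ "{b \<in> Nset_basis. b \<subseteq> W}"]) blast
qed

lemma zero_dim_tauI: "zero_dim T"
  unfolding zero_dim_def
proof (intro exI conjI ballI)
  show "open_basis T Nset_basis"
    by (rule open_basis_Nset_basis)
  show "clopenin T U" if "U \<in> Nset_basis" for U
    using that openin_Nset closedin_Nset unfolding clopenin_def Nset_basis_def by blast
qed

lemma regular_space_tauI: "regular_space T"
  using zero_dim_tauI by (rule zero_dim_imp_regular_space)

lemma Hausdorff_space_tauI: "Hausdorff_space T"
  using regular_space_tauI t1_space_tauI by (rule regular_t1_imp_Hausdorff_space)

lemma Nset_subset_Nset_iff:
  assumes "x \<in> fspace V"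
  shows "Nset V D x \<subseteq> Nset V E x \<longleftrightarrow> E \<subseteq> D"
proof
  assume sub: "Nset V D x \<subseteq> Nset V E x"
  show "E \<subseteq> D"
  proof
    fix i assume "i \<in> E"
    obtain a b where "a \<in> V" "b \<in> V" "a \<noteq> b"
      using two_values by blast
    then obtain v where v: "v \<in> V" "v \<noteq> x i"
      by (cases "a = x i") auto
    show "i \<in> D"
    proof (rule ccontr)
      assume "i \<notin> D"
      then have "x(i := v) \<in> Nset V D x"
        using assms v(1) by (auto simp: Nset_def fspace_def)
      then have "x(i := v) \<in> Nset V E x"
        using sub by blast
      then have "(x(i := v)) i = x i"
        using \<open>i \<in> E\<close> unfolding Nset_def by blast
      then show False
        using v(2) by simp
    qed
  qed
qed (rule Nset_antimono)

lemma not_openin_singleton: "\<not> openin T {x}"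
proof
  assume "openin T {x}"
  then obtain D where "D \<in> I" "Nset V D x \<subseteq> {x}" "x \<in> fspace V"
    unfolding openin_tauI_iff by blast
  then have "Nset V D x \<subseteq> Nset V UNIV x"
    by (simp add: Nset_UNIV)
  then have "D = UNIV"
    using Nset_subset_Nset_iff[OF \<open>x \<in> fspace V\<close>] by blast
  then show False
    using \<open>D \<in> I\<close> UNIV_notin_I by simp
qed

lemma no_isolated_points_tauI: "no_isolated_points T"
  by (simp add: no_isolated_points_def not_openin_singleton)

lemma open_nbhd_basis_Nset_image:
  assumes "ideal_basis I B" and "x \<in> fspace V"
  shows "open_nbhd_basis T x ((\<lambda>D. Nset V D x) ` B)"
  unfolding open_nbhd_basis_def
proof (intro conjI ballI allI impI)
  fix U assume "U \<in> (\<lambda>D. Nset V D x) ` B"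
  then obtain D where "D \<in> I" "U = Nset V D x"
    using assms(1) unfolding ideal_basis_def by blast
  then show "openin T U" "x \<in> U"
    using openin_Nset Nset_self[OF assms(2)] by simp_all
next
  fix W assume "openin T W \<and> x \<in> W"
  then obtain D where "D \<in> I" "Nset V D x \<subseteq> W"
    unfolding openin_tauI_iff by blast
  moreover obtain C where "C \<in> B" "D \<subseteq> C"
    using assms(1) \<open>D \<in> I\<close> unfolding ideal_basis_def by blast
  ultimately show "\<exists>U\<in>(\<lambda>D. Nset V D x) ` B. U \<subseteq> W"
    using Nset_antimono[of D C V x] by blast
qed

lemma ideal_basis_of_open_nbhd_basis:
  assumes "x \<in> fspace V" and "open_nbhd_basis T x N"
  shows "\<exists>B. ideal_basis I B \<and> |B| \<le>o |N|"
proof -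
  have "\<forall>U\<in>N. \<exists>D\<in>I. Nset V D x \<subseteq> U"
    using assms(2) unfolding open_nbhd_basis_def openin_tauI_iff by blast
  then obtain D where D: "\<And>U. U \<in> N \<Longrightarrow> D U \<in> I \<and> Nset V (D U) x \<subseteq> U"
    by metis
  have "ideal_basis I (D ` N)"
    unfolding ideal_basis_def
  proof (intro conjI ballI)
    show "D ` N \<subseteq> I"
      using D by blast
    fix E assume "E \<in> I"
    then have "openin T (Nset V E x) \<and> x \<in> Nset V E x"
      using openin_Nset Nset_self[OF assms(1)] by blast
    then obtain U where "U \<in> N" "U \<subseteq> Nset V E x"
      using assms(2) unfolding open_nbhd_basis_def by blast
    then have "Nset V (D U) x \<subseteq> Nset V E x"
      using D by blast
    then have "E \<subseteq> D U"
      using Nset_subset_Nset_iff[OF assms(1)] by blast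
    then show "\<exists>C\<in>D ` N. E \<subseteq> C"
      using \<open>U \<in> N\<close> by blast
  qed
  then show ?thesis
    using card_of_image[of D N] by blast
qed

end

section \<open>\<open>\<kappa>\<close>-complete ideals\<close>

locale complete_tauI_space = tauI_space I V
  for I :: "'a set set" and V :: "'b set" +
  fixes r :: "'a rel"
  assumes Card_order_r: "Card_order r" and Field_r: "Field r = UNIV"
    and Union_in_I: "\<F> \<subseteq> I \<Longrightarrow> |\<F>| <o r \<Longrightarrow> \<Union>\<F> \<in> I"
begin

lemma UN_in_I:
  assumes "\<And>j. j \<in> J \<Longrightarrow> D j \<in> I" and "|J| <o r"
  shows "(\<Union>j\<in>J. D j) \<in> I"
proof (rule Union_in_I)
  show "D ` J \<subseteq> I"
    using assms(1) by blast
  show "|D ` J| <o r"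
    using card_of_image assms(2) by (rule ordLeq_ordLess_trans)
qed

lemma openin_Inter_small:
  assumes "\<And>U. U \<in> \<G> \<Longrightarrow> openin T U" and "|\<G>| <o r"
  shows "openin T (topspace T \<inter> \<Inter>\<G>)"
  unfolding topspace_tauI openin_tauI_iff
proof (intro conjI ballI)
  fix x assume x: "x \<in> fspace V \<inter> \<Inter>\<G>"
  have "\<forall>U\<in>\<G>. \<exists>D\<in>I. Nset V D x \<subseteq> U"
    using assms(1) x unfolding openin_tauI_iff by blast
  then obtain D where D: "\<And>U. U \<in> \<G> \<Longrightarrow> D U \<in> I \<and> Nset V (D U) x \<subseteq> U"
    by metis
  have "(\<Union>U\<in>\<G>. D U) \<in> I"
    using D assms(2) by (intro UN_in_I) auto
  moreover have "Nset V (\<Union>U\<in>\<G>. D U) x \<subseteq> U" if "U \<in> \<G>" for U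
    using Nset_antimono[of "D U" "\<Union>U\<in>\<G>. D U" V x] D[OF that] that by blast
  then have "Nset V (\<Union>U\<in>\<G>. D U) x \<subseteq> fspace V \<inter> \<Inter>\<G>"
    by (auto simp: Nset_def)
  ultimately show "\<exists>E\<in>I. Nset V E x \<subseteq> fspace V \<inter> \<Inter>\<G>"
    by blast
qed blast

lemma not_openin_Inter_large:
  fixes s :: "'c rel"
  assumes "Well_order s" and "r \<le>o s"
  shows "\<exists>U. (\<forall>\<beta>\<in>Field s. openin T (U \<beta>)) \<and> \<not> openin T (topspace T \<inter> (\<Inter>\<beta>\<in>Field s. U \<beta>))"
proof -
  have "|UNIV :: 'a set| \<le>o |Field s|"
    using card_of_mono2[OF assms(2)] Field_r by simp
  then obtain f :: "'a \<Rightarrow> 'c" where f: "inj f" "range f \<subseteq> Field s"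
    using card_of_ordLeq[of "UNIV :: 'a set" "Field s"] by blast
  obtain a where "a \<in> V"
    using two_values by blast
  define x :: "'a \<Rightarrow> 'b" where "x = (\<lambda>_. a)"
  have x: "x \<in> fspace V"
    using \<open>a \<in> V\<close> by (simp add: x_def fspace_def)
  \<comment> \<open>The \<open>U \<beta>\<close> reindex the neighbourhoods of \<open>x\<close> fixing one coordinate.\<close>
  define U where "U \<beta> = Nset V (f -` {\<beta>}) x" for \<beta>
  have U_open: "openin T (U \<beta>)" for \<beta>
  proof -
    have "i = j" if "i \<in> f -` {\<beta>}" "j \<in> f -` {\<beta>}" for i j
    proof -
      have "f i = f j"
        using that by simp
      then show "i = j"
        by (rule injD[OF f(1)])
    qed
    then have "f -` {\<beta>} \<in> I"
      by (rule subsingleton_in_I)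
    then show ?thesis
      unfolding U_def by (rule openin_Nset)
  qed
  have "topspace T \<inter> (\<Inter>\<beta>\<in>Field s. U \<beta>) = {x}"
  proof
    show "{x} \<subseteq> topspace T \<inter> (\<Inter>\<beta>\<in>Field s. U \<beta>)"
      using x by (simp add: topspace_tauI U_def Nset_self)
    show "topspace T \<inter> (\<Inter>\<beta>\<in>Field s. U \<beta>) \<subseteq> {x}"
    proof
      fix y assume y: "y \<in> topspace T \<inter> (\<Inter>\<beta>\<in>Field s. U \<beta>)"
      have "y j = x j" for j
      proof -
        have "y \<in> U (f j)"
          using y f(2) by blast
        then show ?thesis
          by (simp add: U_def Nset_def)
      qed
      then show "y \<in> {x}"
        by (simp add: fun_eq_iff)
    qed
  qed
  then show ?thesis
    using U_open not_openin_singleton by (intro exI[of _ U]) simp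
qed

lemma openin_Inter_iff:
  fixes s :: "'c rel"
  assumes "Well_order s"
  shows "(\<forall>U. (\<forall>\<beta>\<in>Field s. openin T (U \<beta>)) \<longrightarrow>
            openin T (topspace T \<inter> (\<Inter>\<beta>\<in>Field s. U \<beta>))) \<longleftrightarrow> s <o r"
proof
  assume "s <o r"
  show "\<forall>U. (\<forall>\<beta>\<in>Field s. openin T (U \<beta>)) \<longrightarrow> openin T (topspace T \<inter> (\<Inter>\<beta>\<in>Field s. U \<beta>))"
  proof (intro allI impI)
    fix U assume "\<forall>\<beta>\<in>Field s. openin T (U \<beta>)"
    have "|U ` Field s| \<le>o |Field s|"
      by (rule card_of_image)
    also have "|Field s| \<le>o s"
      using assms by (rule card_of_least)
    also note \<open>s <o r\<close>
    finally have "|U ` Field s| <o r" .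
    then have "openin T (topspace T \<inter> \<Inter>(U ` Field s))"
      using \<open>\<forall>\<beta>\<in>Field s. openin T (U \<beta>)\<close> by (intro openin_Inter_small) auto
    then show "openin T (topspace T \<inter> (\<Inter>\<beta>\<in>Field s. U \<beta>))"
      by simp
  qed
next
  assume all_open: "\<forall>U. (\<forall>\<beta>\<in>Field s. openin T (U \<beta>)) \<longrightarrow>
            openin T (topspace T \<inter> (\<Inter>\<beta>\<in>Field s. U \<beta>))"
  show "s <o r"
  proof (rule ccontr)
    assume "\<not> s <o r"
    then have "r \<le>o s"
      using not_ordLess_iff_ordLeq[OF card_order_on_well_order_on[OF Card_order_r] assms] by blast
    then show False
      using not_openin_Inter_large[OF assms] all_open by blast
  qed
qed

lemma clopenin_Union_small:
  assumes "\<And>C. C \<in> \<F> \<Longrightarrow> clopenin T C" and "|\<F>| <o r"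
  shows "clopenin T (\<Union>\<F>)"
proof -
  let ?\<G> = "(\<lambda>C. topspace T - C) ` \<F>"
  have "openin T U" if "U \<in> ?\<G>" for U
    using that assms(1) unfolding clopenin_def by blast
  moreover have "|?\<G>| <o r"
    using card_of_image assms(2) by (rule ordLeq_ordLess_trans)
  ultimately have "openin T (topspace T \<inter> \<Inter>?\<G>)"
    by (rule openin_Inter_small)
  moreover have "topspace T \<inter> \<Inter>?\<G> = topspace T - \<Union>\<F>"
    by blast
  moreover have "openin T (\<Union>\<F>)"
    using assms(1) unfolding clopenin_def by (simp add: openin_Union)
  ultimately show ?thesis
    unfolding clopenin_def closedin_def using openin_subset[of T "\<Union>\<F>"] by simp
qed

lemma card_of_ideal_basis_ge:
  assumes "ideal_basis I B"
  shows "r \<le>o |B|"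
proof (rule ccontr)
  assume "\<not> r \<le>o |B|"
  then have "|B| <o r"
    using not_ordLeq_iff_ordLess[OF card_of_Well_order[of B] card_order_on_well_order_on[OF Card_order_r]]
    by simp
  moreover have "B \<subseteq> I"
    using assms unfolding ideal_basis_def by (rule conjunct1)
  ultimately have "\<Union>B \<in> I"
    using Union_in_I by simp
  moreover have "i \<in> \<Union>B" for i
  proof -
    obtain C where "C \<in> B" "{i} \<subseteq> C"
      using assms singleton_in_I unfolding ideal_basis_def by blast
    then show ?thesis
      by blast
  qed
  then have "\<Union>B = UNIV"
    by blast
  ultimately show False
    using UNIV_notin_I by simp
qed

lemma card_of_open_nbhd_basis_ge:
  assumes "x \<in> topspace T" and "open_nbhd_basis T x N"
  shows "r \<le>o |N|"
proof -
  obtain B where "ideal_basis I B" "|B| \<le>o |N|"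
    using ideal_basis_of_open_nbhd_basis assms unfolding topspace_tauI by blast
  then show ?thesis
    using ordLeq_transitive[OF card_of_ideal_basis_ge] by blast
qed

lemma open_nbhd_bases_iff_ideal_basis:
  "(\<forall>x\<in>topspace T. \<exists>N. open_nbhd_basis T x N \<and> |N| =o r) \<longleftrightarrow> (\<exists>B. ideal_basis I B \<and> |B| =o r)"
proof
  assume bases: "\<forall>x\<in>topspace T. \<exists>N. open_nbhd_basis T x N \<and> |N| =o r"
  obtain a where "a \<in> V"
    using two_values by blast
  then have "(\<lambda>_. a) \<in> topspace T"
    by (simp add: topspace_tauI fspace_def)
  then obtain N where N: "open_nbhd_basis T (\<lambda>_. a) N" "|N| =o r"
    using bases by blast
  then obtain B where B: "ideal_basis I B" "|B| \<le>o |N|"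
    using ideal_basis_of_open_nbhd_basis \<open>(\<lambda>_. a) \<in> topspace T\<close> unfolding topspace_tauI by blast
  have "|B| =o r"
    using ordLeq_ordIso_trans[OF B(2) N(2)] card_of_ideal_basis_ge[OF B(1)]
    by (simp add: ordIso_iff_ordLeq)
  then show "\<exists>B. ideal_basis I B \<and> |B| =o r"
    using B(1) by blast
next
  assume "\<exists>B. ideal_basis I B \<and> |B| =o r"
  then obtain B where B: "ideal_basis I B" "|B| =o r"
    by blast
  show "\<forall>x\<in>topspace T. \<exists>N. open_nbhd_basis T x N \<and> |N| =o r"
  proof
    fix x assume x: "x \<in> topspace T"
    let ?N = "(\<lambda>D. Nset V D x) ` B"
    have N: "open_nbhd_basis T x ?N"
      using B(1) x topspace_tauI by (simp add: open_nbhd_basis_Nset_image)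
    have "|?N| \<le>o r"
      using card_of_image B(2) by (rule ordLeq_ordIso_trans)
    moreover have "r \<le>o |?N|"
      using x N by (rule card_of_open_nbhd_basis_ge)
    ultimately show "\<exists>N. open_nbhd_basis T x N \<and> |N| =o r"
      using N ordIso_iff_ordLeq by blast
  qed
qed

end

section \<open>An ideal member of full size\<close>

locale large_tauI_space = tauI_space I V
  for I :: "'a set set" and V :: "'b set" +
  fixes A :: "'a set"
  assumes A_in_I: "A \<in> I"
    and card_of_A: "|A| =o |UNIV :: 'a set|"
    and infinite_index: "infinite (UNIV :: 'a set)"
    and card_of_V: "|V| \<le>o |UNIV :: 'a set|"
begin

definition agreement_classes :: "('a \<Rightarrow> 'b) set set" where
  "agreement_classes = (\<lambda>x. Nset V A x) ` fspace V"

lemma pairwise_disjnt_agreement_classes: "pairwise disjnt agreement_classes"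
proof (rule pairwiseI)
  fix U U' assume "U \<in> agreement_classes" "U' \<in> agreement_classes" "U \<noteq> U'"
  then obtain x x' where U: "U = Nset V A x" "U' = Nset V A x'"
    unfolding agreement_classes_def by blast
  show "disjnt U U'"
  proof (rule ccontr)
    assume "\<not> disjnt U U'"
    then obtain y where "y \<in> Nset V A x" "y \<in> Nset V A x'"
      unfolding U disjnt_def by blast
    then have "Nset V A x = Nset V A x'"
      using Nset_eq_Nset by metis
    then show False
      using U \<open>U \<noteq> U'\<close> by simp
  qed
qed

lemma agreement_classes_open_nonempty:
  assumes "U \<in> agreement_classes"
  shows "openin T U \<and> U \<noteq> {}"
proof -
  obtain x where "x \<in> fspace V" "U = Nset V A x"
    using assms unfolding agreement_classes_def by blast
  then show ?thesis
    using openin_Nset[OF A_in_I] Nset_self by blast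
qed

lemma Union_agreement_classes: "\<Union>agreement_classes = topspace T"
proof
  show "\<Union>agreement_classes \<subseteq> topspace T"
    using agreement_classes_open_nonempty openin_subset by blast
  show "topspace T \<subseteq> \<Union>agreement_classes"
    unfolding topspace_tauI agreement_classes_def using Nset_self by blast
qed

lemma card_of_Pow_le_agreement_classes: "|Pow A| \<le>o |agreement_classes|"
proof -
  obtain a b where ab: "a \<in> V" "b \<in> V" "a \<noteq> b"
    using two_values by blast
  define x :: "'a set \<Rightarrow> 'a \<Rightarrow> 'b" where "x S i = (if i \<in> S then b else a)" for S i
  have x: "x S \<in> fspace V" for S
    using ab by (simp add: x_def fspace_def)
  show ?thesis
  proof (rule card_of_ordLeqI[of "\<lambda>S. Nset V A (x S)"])
    show "inj_on (\<lambda>S. Nset V A (x S)) (Pow A)"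
    proof (rule inj_onI)
      fix S S' assume S: "S \<in> Pow A" "S' \<in> Pow A" and eq: "Nset V A (x S) = Nset V A (x S')"
      have "x S \<in> Nset V A (x S')"
        using Nset_self[OF x] eq by metis
      then have "x S i = x S' i" if "i \<in> A" for i
        using that by (simp add: Nset_def)
      then show "S = S'"
        using S ab(3) unfolding x_def by (metis PowD subsetD subset_antisym subsetI)
    qed
    show "Nset V A (x S) \<in> agreement_classes" for S
      unfolding agreement_classes_def using x by blast
  qed
qed

lemma card_of_Pow_A: "|Pow A| =o |Pow (UNIV :: 'a set)|"
  using card_of_A by (rule card_of_Pow_cong)

lemma card_of_Pow_UNIV_le_agreement_classes: "|Pow (UNIV :: 'a set)| \<le>o |agreement_classes|"
  using ordIso_symmetric[OF card_of_Pow_A] card_of_Pow_le_agreement_classes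
  by (rule ordIso_ordLeq_trans)

lemma not_compact_space_tauI: "\<not> compact_space T"
proof (rule not_compact_space_disjoint_open_cover)
  have "infinite (Pow A)"
    using card_of_ordIso_finite[OF card_of_A] infinite_index by simp
  then show "infinite agreement_classes"
    using card_of_ordLeq_finite[OF card_of_Pow_le_agreement_classes] by blast
qed (use pairwise_disjnt_agreement_classes agreement_classes_open_nonempty
      Union_agreement_classes in auto)

lemma not_kappa_compact_tauI:
  assumes "r \<le>o |Pow (UNIV :: 'a set)|"
  shows "\<not> kappa_compact r T"
proof (rule not_kappa_compact_disjoint_open_cover)
  show "r \<le>o |agreement_classes|"
    using assms card_of_Pow_UNIV_le_agreement_classes by (rule ordLeq_transitive)
qed (use pairwise_disjnt_agreement_classes agreement_classes_open_nonempty
      Union_agreement_classes in auto)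

lemma card_of_Nset_basis_le: "|Nset_basis| \<le>o |Pow (UNIV :: 'a set)|"
proof -
  let ?P = "Pow (UNIV :: 'a set)" and ?F = "fspace V :: ('a \<Rightarrow> 'b) set"
  have "Nset_basis \<subseteq> (\<lambda>(D, x). Nset V D x) ` (?P \<times> ?F)"
    unfolding Nset_basis_def by auto
  then have "|Nset_basis| \<le>o |(\<lambda>(D, x). Nset V D x) ` (?P \<times> ?F)|"
    by (rule card_of_mono1)
  also have "|(\<lambda>(D, x). Nset V D x) ` (?P \<times> ?F)| \<le>o |?P \<times> ?F|"
    by (rule card_of_image)
  also have "|?P \<times> ?F| \<le>o |?P \<times> ?P|"
    using card_of_fspace_le_Pow[OF infinite_index card_of_V] by (rule card_of_Times_mono2)
  also have "|?P \<times> ?P| =o |?P|"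
    using infinite_index by (intro card_of_Times_same_infinite) (simp del: Pow_UNIV)
  finally show ?thesis .
qed

lemma weight_tauI: "weight_is T |Pow (UNIV :: 'a set)|"
proof -
  have lower: "|Pow (UNIV :: 'a set)| \<le>o |B|" if "open_basis T B" for B
    using card_of_Pow_UNIV_le_agreement_classes
      card_of_open_basis_ge_disjoint_open_family[OF pairwise_disjnt_agreement_classes
        agreement_classes_open_nonempty that]
    by (rule ordLeq_transitive)
  then have "|Nset_basis| =o |Pow (UNIV :: 'a set)|"
    using open_basis_Nset_basis card_of_Nset_basis_le by (simp add: ordIso_iff_ordLeq)
  then show ?thesis
    unfolding weight_is_def using open_basis_Nset_basis lower by blast
qed

lemma card_of_open_sets_tauI: "|{U. openin T U}| =o |Pow (Pow (UNIV :: 'a set))|"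
proof -
  have "|{U. openin T U}| \<le>o |Pow Nset_basis|"
    using open_basis_Nset_basis by (rule card_of_open_sets_le_Pow_basis)
  also have "|Pow Nset_basis| \<le>o |Pow (Pow (UNIV :: 'a set))|"
    using card_of_Nset_basis_le by (rule card_of_Pow_mono)
  finally have upper: "|{U. openin T U}| \<le>o |Pow (Pow (UNIV :: 'a set))|" .
  have "|Pow (Pow (UNIV :: 'a set))| =o |Pow (Pow A)|"
    using card_of_Pow_cong[OF card_of_Pow_A] by (rule ordIso_symmetric)
  also have "|Pow (Pow A)| \<le>o |Pow agreement_classes|"
    using card_of_Pow_le_agreement_classes by (rule card_of_Pow_mono)
  also have "|Pow agreement_classes| \<le>o |{U. openin T U}|"
    using pairwise_disjnt_agreement_classes agreement_classes_open_nonempty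
    by (rule card_of_open_sets_ge_disjoint_open_family)
  finally show ?thesis
    using upper by (simp add: ordIso_iff_ordLeq)
qed

lemma density_tauI: "density_is T |Pow (UNIV :: 'a set)|"
proof -
  have lower: "|Pow (UNIV :: 'a set)| \<le>o |D|" if "T closure_of D = topspace T" for D
    using card_of_Pow_UNIV_le_agreement_classes
      card_of_dense_ge_disjoint_open_family[OF pairwise_disjnt_agreement_classes
        agreement_classes_open_nonempty that]
    by (rule ordLeq_transitive)
  have "|topspace T| \<le>o |Pow (UNIV :: 'a set)|"
    using card_of_fspace_le_Pow[OF infinite_index card_of_V] by (simp add: topspace_tauI)
  then have "|topspace T| =o |Pow (UNIV :: 'a set)|"
    using lower[of "topspace T"] by (simp add: ordIso_iff_ordLeq)
  then show ?thesis
    unfolding density_is_def using lower by auto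
qed

end

section \<open>Regular uncountable \<open>\<kappa>\<close>\<close>

lemma kbounded_singleton:
  assumes "Card_order r" and "i \<in> Field r"
  shows "kbounded r {i}"
proof -
  have "Refl r"
    using wo_rel.REFL card_order_on_well_order_on[OF assms(1)] unfolding wo_rel_def by blast
  then have "(i, i) \<in> r"
    using assms(2) by (rule refl_onD)
  then show ?thesis
    using assms(2) unfolding kbounded_def by blast
qed

lemma complete_tauI_spaceI:
  fixes r :: "'a rel" and V :: "'b set"
  assumes "Card_order r" and "Field r = UNIV"
    and "kcomplete_proper_ideal r I" and "\<And>A. kbounded r A \<Longrightarrow> A \<in> I"
    and "\<exists>a b. a \<in> V \<and> b \<in> V \<and> a \<noteq> b"
  shows "complete_tauI_space I V r"
proof unfold_locales
  show "{} \<in> I" and "UNIV \<notin> I"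
    using assms(2,3) unfolding kcomplete_proper_ideal_def by auto
  show "A \<union> B \<in> I" if "A \<in> I" "B \<in> I" for A B
    using assms(3) that unfolding kcomplete_proper_ideal_def by blast
  show "\<Union>\<F> \<in> I" if "\<F> \<subseteq> I" "|\<F>| <o r" for \<F>
    using assms(3) that unfolding kcomplete_proper_ideal_def by blast
  show "{i} \<in> I" for i
    using assms(1,2) by (intro assms(4) kbounded_singleton) simp_all
qed (fact assms)+

context complete_tauI_space
begin

lemma consequences_of_unbounded_member:
  assumes "regularCard r" and "infinite (UNIV :: 'a set)" and "|V| \<le>o |UNIV :: 'a set|"
    and "A \<in> I" and "\<not> kbounded r A"
  shows "(\<not> compact_space T \<and> \<not> kappa_compact r T)
    \<and> (weight_is T |Pow (UNIV :: 'a set)| \<and> |{U. openin T U}| =o |Pow (Pow (UNIV :: 'a set))| )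
    \<and> density_is T |Pow (UNIV :: 'a set)|"
proof -
  have r_UNIV: "r =o |UNIV :: 'a set|"
    using card_of_Field_ordIso[OF Card_order_r] Field_r by (simp add: ordIso_symmetric)
  moreover have "|A| =o r"
    using card_of_unbounded_regular[OF Card_order_r assms(1)] Field_r assms(5) by simp
  ultimately interpret large_tauI_space I V A
    using assms(2-4) ordIso_transitive by unfold_locales blast+
  have "r \<le>o |Pow (UNIV :: 'a set)|"
    using ordIso_ordLess_trans[OF r_UNIV card_of_Pow] by (rule ordLess_imp_ordLeq)
  then show ?thesis
    using not_compact_space_tauI not_kappa_compact_tauI weight_tauI card_of_open_sets_tauI
      density_tauI by blast
qed

end

lemma two_values_if_UNIV_or_card_2:
  fixes V :: "'a set"
  assumes "V = UNIV \<or> card V = 2" and "infinite (UNIV :: 'a set)"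
  shows "\<exists>a b. a \<in> V \<and> b \<in> V \<and> a \<noteq> b"
proof (cases "V = UNIV")
  case True
  obtain a :: 'a where "a \<notin> {}"
    by blast
  obtain b where "b \<notin> {a}"
    using ex_new_if_finite[OF assms(2)] by blast
  then show ?thesis
    using True by blast
next
  case False
  then show ?thesis
    using assms(1) by (auto simp: card_2_iff)
qed

lemma infinite_Field_if_natLeq_ordLess:
  assumes "Card_order r" and "natLeq <o r"
  shows "infinite (Field r)"
proof -
  have "natLeq \<le>o |Field r|"
    using ordLess_imp_ordLeq[OF assms(2)] ordIso_symmetric[OF card_of_Field_ordIso[OF assms(1)]]
    by (rule ordLeq_ordIso_trans)
  then show ?thesis
    using infinite_iff_natLeq_ordLeq by blast
qed

theorem lemma2p5:
  fixes r :: "'a rel" and I :: "'a set set" and V :: "'a set"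
  assumes kappa_card: "Card_order r" and kappa_field: "Field r = UNIV"
    and kappa_regular: "regularCard r"
    and kappa_uncountable: "natLeq <o r"
    and ideal: "kcomplete_proper_ideal r I"
    and bounded_in: "\<And>A. kbounded r A \<Longrightarrow> A \<in> I"
    and nu: "V = UNIV \<or> card V = 2"
  defines "T \<equiv> tauI I V"
  shows
    "(no_isolated_points T \<and> regular_space T \<and> Hausdorff_space T \<and> zero_dim T)
     \<and>
     (\<forall>s :: 'c rel. Well_order s \<longrightarrow>
       ((\<forall>U. (\<forall>\<beta>\<in>Field s. openin T (U \<beta>)) \<longrightarrow>
              openin T (topspace T \<inter> (\<Inter>\<beta>\<in>Field s. U \<beta>)))
        \<longleftrightarrow> s <o r))
     \<and>
     ((\<forall>C. clopenin T C \<longrightarrow> clopenin T (topspace T - C)) \<and>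
      (\<forall>F. (\<forall>C\<in>F. clopenin T C) \<and> |F| <o r \<longrightarrow> clopenin T (\<Union>F)))
     \<and>
     (\<forall>x\<in>topspace T. \<forall>B. open_nbhd_basis T x B \<longrightarrow> r \<le>o card_of B)
     \<and>
     ((\<forall>x\<in>topspace T. \<exists>B. open_nbhd_basis T x B \<and> |B| =o r)
       \<longleftrightarrow> (\<exists>B. ideal_basis I B \<and> |B| =o r))
     \<and>
     ((\<exists>A\<in>I. \<not> kbounded r A) \<longrightarrow>
        (\<not> compact_space T \<and> \<not> kappa_compact r T)
        \<and> (weight_is T (card_of (Pow (UNIV :: 'a set))) \<and>
           card_of {U. openin T U} =o card_of (Pow (Pow (UNIV :: 'a set))))
        \<and> density_is T (card_of (Pow (UNIV :: 'a set))))"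
proof -
  have infinite: "infinite (UNIV :: 'a set)"
    using infinite_Field_if_natLeq_ordLess[OF kappa_card kappa_uncountable] kappa_field by simp
  interpret complete_tauI_space I V r
    by (rule complete_tauI_spaceI[OF kappa_card kappa_field ideal bounded_in
          two_values_if_UNIV_or_card_2[OF nu infinite]])
  have "|V| \<le>o |UNIV :: 'a set|"
    by (rule card_of_mono1) simp
  note unbounded = consequences_of_unbounded_member[OF kappa_regular infinite this]
  show ?thesis
    unfolding T_def
    apply (intro conjI)
    apply (fact no_isolated_points_tauI)
    apply (fact regular_space_tauI)
    apply (fact Hausdorff_space_tauI)
    apply (fact zero_dim_tauI)
    using openin_Inter_iff apply blast
    using clopenin_topspace_diff apply blast
    using clopenin_Union_small apply blast
    using card_of_open_nbhd_basis_ge apply blast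
    apply (fact open_nbhd_bases_iff_ideal_basis)
    using unbounded apply blast
    done
qed

end
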